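(* Let $S$ be a finite poset which contains a subposet (with induced order) isomorphic to $V$ but no subposet isomorphic to $W^4$. Then $C(f_S)\ne\varnothing$.
   Context: $f_S(x)=\sum_i x_i^2+\sum_{s_i<s_j}x_ix_j$. $H_n=\{x:\sum x_i=0\}$; $C(f)$ is the set of $h\in H_n\setminus\{0\}$ with either all $\partial f/\partial x_i(h)\le0$ or all $\ge0$. $V=\{h^-,h_1,h_2,h^+\}$ with $h^-<h_1<h^+$, $h^-<h_2<h^+$, $h_1,h_2$ incomparable. $W^4=\{a_1,a_2,b_1,b_2\}$ with only strict relations $a_1<b_1$, $a_1<b_2$, $a_2<b_1$, $a_2<b_2$. *)

theory Defs
  imports "HOL-Analysis.Analysis"
begin

text \<open>A finite poset S is a finite subset of a type with a partial order (induced order).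
 Vectors x in R^S are functions 'a => real (values outside S are irrelevant).\<close>

definition fS :: "'a::order set \<Rightarrow> ('a \<Rightarrow> real) \<Rightarrow> real" where
  "fS S x = (\<Sum>i\<in>S. (x i)^2) + (\<Sum>p\<in>{(i,j). i \<in> S \<and> j \<in> S \<and> i < j}. x (fst p) * x (snd p))"

definition partial :: "(('a \<Rightarrow> real) \<Rightarrow> real) \<Rightarrow> 'a \<Rightarrow> ('a \<Rightarrow> real) \<Rightarrow> real" where
  "partial f k x = deriv (\<lambda>t. f (x(k := x k + t))) 0"

definition Cset :: "'a set \<Rightarrow> (('a \<Rightarrow> real) \<Rightarrow> real) \<Rightarrow> ('a \<Rightarrow> real) set" where
  "Cset S f = {h. (\<forall>i. i \<notin> S \<longrightarrow> h i = 0) \<and> (\<Sum>i\<in>S. h i) = 0 \<and> (\<exists>i\<in>S. h i \<noteq> 0) \<and>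
      ((\<forall>k\<in>S. partial f k h \<le> 0) \<or> (\<forall>k\<in>S. partial f k h \<ge> 0))}"

definition contains_V :: "'a::order set \<Rightarrow> bool" where
  "contains_V S = (\<exists>m a b p. m \<in> S \<and> a \<in> S \<and> b \<in> S \<and> p \<in> S \<and>
      m < a \<and> a < p \<and> m < b \<and> b < p \<and> \<not> a \<le> b \<and> \<not> b \<le> a)"

definition contains_W4 :: "'a::order set \<Rightarrow> bool" where
  "contains_W4 S = (\<exists>a1 a2 b1 b2. a1 \<in> S \<and> a2 \<in> S \<and> b1 \<in> S \<and> b2 \<in> S \<and>
      a1 < b1 \<and> a1 < b2 \<and> a2 < b1 \<and> a2 < b2 \<and>
      \<not> a1 \<le> a2 \<and> \<not> a2 \<le> a1 \<and> \<not> b1 \<le> b2 \<and> \<not> b2 \<le> b1)"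

end

theory Submission
  imports Defs
begin

text \<open>For a copy m < a, b < p of V take h = e_a + e_b - e_m - e_p. The partial derivative
  of f_S at h in direction k is 2 h_k plus the sum of the h_j over the j strictly comparable
  with k. It equals -1 at m and p and 0 at a and b; for any other k, the absence of W4 forces
  k to be comparable with at least as many of m, p as of a, b, so every partial derivative
  is \<le> 0.\<close>

lemma partial_fS_expand:
  fixes S :: "'a::order set"
  shows "partial (fS S) k x =
    (\<Sum>i\<in>S. 2 * x i * of_bool (i = k)) +
    (\<Sum>(i, j)\<in>{(i, j). i \<in> S \<and> j \<in> S \<and> i < j}. of_bool (i = k) * x j + x i * of_bool (j = k))"
proof -
  define y where "y t i = x i + t * of_bool (i = k)" for t i
  have "(\<lambda>t. fS S (x(k := x k + t))) = (\<lambda>t. (\<Sum>i\<in>S. (y t i)\<^sup>2) +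
      (\<Sum>(i, j)\<in>{(i, j). i \<in> S \<and> j \<in> S \<and> i < j}. y t i * y t j))"
  proof -
    have "(x(k := x k + t)) i = y t i" for t i
      by (simp add: y_def)
    then show ?thesis
      unfolding fS_def by (simp add: split_def)
  qed
  moreover have "((\<lambda>t. (\<Sum>i\<in>S. (y t i)\<^sup>2) +
      (\<Sum>(i, j)\<in>{(i, j). i \<in> S \<and> j \<in> S \<and> i < j}. y t i * y t j)) has_real_derivative
    (\<Sum>i\<in>S. 2 * x i * of_bool (i = k)) +
    (\<Sum>(i, j)\<in>{(i, j). i \<in> S \<and> j \<in> S \<and> i < j}. of_bool (i = k) * x j + x i * of_bool (j = k))) (at 0)"
    unfolding y_def split_def
    by (auto intro!: derivative_eq_intros sum.cong simp: mult_ac)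
  ultimately show ?thesis
    unfolding partial_def by (simp add: DERIV_imp_deriv)
qed

lemma partial_fS:
  fixes S :: "'a::order set"
  assumes "finite S" "k \<in> S"
  shows "partial (fS S) k x = 2 * x k + (\<Sum>j\<in>{j\<in>S. j < k \<or> k < j}. x j)"
proof -
  define P where "P = {(i, j). i \<in> S \<and> j \<in> S \<and> i < j}"
  have "finite P"
    using assms(1) finite_subset[of P "S \<times> S"] by (auto simp: P_def)
  have above: "(\<Sum>(i, j)\<in>P. of_bool (i = k) * x j) = (\<Sum>j\<in>{j\<in>S. k < j}. x j)"
  proof -
    have "(\<Sum>(i, j)\<in>P. of_bool (i = k) * x j) = (\<Sum>(i, j)\<in>Pair k ` {j\<in>S. k < j}. x j)"
      using \<open>finite P\<close> assms(2) by (intro sum.mono_neutral_cong_right) (auto simp: P_def)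
    then show ?thesis
      by (simp add: sum.reindex inj_on_def)
  qed
  have below: "(\<Sum>(i, j)\<in>P. x i * of_bool (j = k)) = (\<Sum>i\<in>{i\<in>S. i < k}. x i)"
  proof -
    have "(\<Sum>(i, j)\<in>P. x i * of_bool (j = k)) = (\<Sum>(i, j)\<in>(\<lambda>i. (i, k)) ` {i\<in>S. i < k}. x i)"
      using \<open>finite P\<close> assms(2) by (intro sum.mono_neutral_cong_right) (auto simp: P_def)
    then show ?thesis
      by (simp add: sum.reindex inj_on_def)
  qed
  have comparable_split: "{j\<in>S. j < k \<or> k < j} = {i\<in>S. i < k} \<union> {j\<in>S. k < j}"
    by auto
  have "(\<Sum>j\<in>{j\<in>S. j < k \<or> k < j}. x j) = (\<Sum>i\<in>{i\<in>S. i < k}. x i) + (\<Sum>j\<in>{j\<in>S. k < j}. x j)"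
    unfolding comparable_split using assms(1) by (intro sum.union_disjoint) auto
  moreover have "(\<Sum>i\<in>S. 2 * x i * of_bool (i = k)) = 2 * x k"
    using assms by (simp add: of_bool_def if_distrib sum.delta' cong: if_cong)
  moreover have "(\<Sum>(i, j)\<in>P. of_bool (i = k) * x j + x i * of_bool (j = k)) =
      (\<Sum>j\<in>{j\<in>S. k < j}. x j) + (\<Sum>i\<in>{i\<in>S. i < k}. x i)"
    using above below by (simp add: split_def sum.distrib)
  ultimately show ?thesis
    unfolding partial_fS_expand P_def[symmetric] by simp
qed

lemma W4_free_comparable_count:
  fixes S :: "'a::order set"
  assumes "\<not> contains_W4 S" "k \<in> S" "m \<in> S" "a \<in> S" "b \<in> S" "p \<in> S"
    and "m < a" "a < p" "m < b" "b < p" "\<not> a \<le> b" "\<not> b \<le> a" "k \<noteq> m" "k \<noteq> p"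
  shows "of_bool (k < a \<or> a < k) + of_bool (k < b \<or> b < k)
    \<le> (of_bool (k < m \<or> m < k) + of_bool (k < p \<or> p < k) :: real)"
proof -
  have below_both: "k < m \<or> m < k" if "k < a" "k < b"
  proof -
    have "k \<le> m \<or> m \<le> k"
      using assms that unfolding contains_W4_def by blast
    then show ?thesis
      using \<open>k \<noteq> m\<close> by auto
  qed
  have above_both: "k < p \<or> p < k" if "a < k" "b < k"
  proof -
    have "k \<le> p \<or> p \<le> k"
      using assms that unfolding contains_W4_def by blast
    then show ?thesis
      using \<open>k \<noteq> p\<close> by auto
  qed
  show ?thesis
    using below_both above_both assms(7-12)
    by (auto dest: order.strict_trans order.strict_trans1 order.strict_trans2)
qed

definition V_vector :: "'a \<Rightarrow> 'a \<Rightarrow> 'a \<Rightarrow> 'a \<Rightarrow> 'a \<Rightarrow> real" where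
  "V_vector m a b p j = of_bool (j = a) + of_bool (j = b) - of_bool (j = m) - of_bool (j = p)"

lemma sum_V_vector:
  assumes "finite A"
  shows "(\<Sum>j\<in>A. V_vector m a b p j) =
    of_bool (a \<in> A) + of_bool (b \<in> A) - of_bool (m \<in> A) - of_bool (p \<in> A)"
  using assms by (simp add: V_vector_def sum.distrib sum_subtractf)

lemma partial_fS_V_vector_nonpos:
  fixes S :: "'a::order set"
  assumes "finite S" "\<not> contains_W4 S" "k \<in> S" "m \<in> S" "a \<in> S" "b \<in> S" "p \<in> S"
    and V: "m < a" "a < p" "m < b" "b < p" "\<not> a \<le> b" "\<not> b \<le> a"
  shows "partial (fS S) k (V_vector m a b p) \<le> 0"
proof -
  let ?h = "V_vector m a b p"
  have partial_h: "partial (fS S) k ?h = 2 * ?h k + of_bool (k < a \<or> a < k) + of_bool (k < b \<or> b < k)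
      - of_bool (k < m \<or> m < k) - of_bool (k < p \<or> p < k)"
    using assms by (auto simp: partial_fS sum_V_vector)
  have distinct: "m \<noteq> a" "m \<noteq> b" "m \<noteq> p" "a \<noteq> b" "a \<noteq> p" "b \<noteq> p"
    using V by auto
  have order_facts: "m < p" "\<not> a < b" "\<not> b < a"
    using V by auto
  consider "k = m" | "k = p" | "k = a" | "k = b" | "k \<notin> {m, p, a, b}"
    by blast
  then show ?thesis
  proof cases
    case 5
    then have "?h k = 0"
      by (auto simp: V_vector_def)
    then show ?thesis
      using partial_h W4_free_comparable_count[OF assms(2-7) V] 5 by simp
  qed (use partial_h V distinct order_facts in \<open>auto simp: V_vector_def\<close>)
qed

theorem lemma9:
  fixes S :: "'a::order set"
  assumes "finite S" and "contains_V S" and "\<not> contains_W4 S"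
  shows "Cset S (fS S) \<noteq> {}"
proof -
  obtain m a b p where V: "m \<in> S" "a \<in> S" "b \<in> S" "p \<in> S"
      "m < a" "a < p" "m < b" "b < p" "\<not> a \<le> b" "\<not> b \<le> a"
    using assms(2) unfolding contains_V_def by blast
  let ?h = "V_vector m a b p"
  have "\<forall>k\<in>S. partial (fS S) k ?h \<le> 0"
    using partial_fS_V_vector_nonpos[OF assms(1,3) _ V] by blast
  moreover have "\<forall>i. i \<notin> S \<longrightarrow> ?h i = 0"
    using V by (auto simp: V_vector_def)
  moreover have "(\<Sum>i\<in>S. ?h i) = 0"
    using assms(1) V by (simp add: sum_V_vector)
  moreover have "?h a \<noteq> 0"
    using V by (auto simp: V_vector_def)
  ultimately have "?h \<in> Cset S (fS S)"
    unfolding Cset_def using V(2) by blast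
  then show ?thesis
    by blast
qed

end
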